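(* The restriction of the projection $\pi:R\to R(F,H)$, $u\mapsto u^\eta$, to the center $Z(R)$ is an algebra isomorphism of $Z(R)$ onto its image $W(F,H)=\pi(Z(R))\subseteq R(F,H)$.
   Context: Let $f\in\mathbb{C}[H]$ be a polynomial. $R=R(f)$ is the associative $\mathbb{C}$-algebra generated by $E,F,H$ with relations $EF-FE=f(H)$, $HE-EH=E$, $HF-FH=-F$; the monomials $F^iH^jE^k$ form a basis of $R$. Let $R(E)=\mathbb{C}[E]$ and $R(F,H)$ the subalgebra generated by $F,H$ (with basis $F^iH^j$). Let $u\in\mathbb{C}[H]$ satisfy $f(H)=\tfrac12(u(H+1)-u(H))$ and $\Omega=2FE+u(H+1)$; the center $Z(R)$ is the polynomial ring $\mathbb{C}[\Omega]$. Fix an algebra homomorphism $\eta:R(E)\to\mathbb{C}$ with $\eta(E)\neq0$ and let $R_\eta(E)=\ker\eta$. Then $R=R(F,H)\oplus R\,R_\eta(E)$ as vector spaces; for $u\in R$, $u^\eta=\pi(u)$ denotes its $R(F,H)$-component. *)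

theory Defs
  imports "HOL-Computational_Algebra.Polynomial"
begin

text \<open>A unital associative complex algebra is modelled as a ring 'a together with
 a ring homomorphism sc from the complex numbers into the centre of 'a
 (scalar multiplication c.x is sc c * x).\<close>

definition complex_alg :: "(complex \<Rightarrow> 'a::ring_1) \<Rightarrow> bool" where
  "complex_alg sc \<longleftrightarrow>
     sc 0 = 0 \<and> sc 1 = 1 \<and>
     (\<forall>a b. sc (a + b) = sc a + sc b) \<and>
     (\<forall>a b. sc (a * b) = sc a * sc b) \<and>
     (\<forall>a x. sc a * x = x * sc a)"

definition peval :: "(complex \<Rightarrow> 'a::ring_1) \<Rightarrow> complex poly \<Rightarrow> 'a \<Rightarrow> 'a" where
  "peval sc p x = (\<Sum>i\<le>degree p. sc (coeff p i) * x ^ i)"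

text \<open>R(f): the algebra generated by E, F, H with EF-FE = f(H), HE-EH = E, HF-FH = -F,
 in which the monomials F^i H^j E^k form a basis (every element is a unique finite
 linear combination of them).\<close>
definition is_R_alg ::
  "(complex \<Rightarrow> 'a::ring_1) \<Rightarrow> complex poly \<Rightarrow> 'a \<Rightarrow> 'a \<Rightarrow> 'a \<Rightarrow> bool" where
  "is_R_alg sc f E F H \<longleftrightarrow>
     complex_alg sc \<and>
     E * F - F * E = peval sc f H \<and>
     H * E - E * H = E \<and>
     H * F - F * H = - F \<and>
     (\<forall>x. \<exists>!c :: nat \<times> nat \<times> nat \<Rightarrow> complex.
         finite {m. c m \<noteq> 0} \<and>
         x = (\<Sum>m\<in>{m. c m \<noteq> 0}.
                 (case m of (i, j, k) \<Rightarrow> sc (c m) * F ^ i * H ^ j * E ^ k)))"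

definition center :: "'a::ring_1 set" where
  "center = {z. \<forall>x. z * x = x * z}"

definition RFH :: "(complex \<Rightarrow> 'a::ring_1) \<Rightarrow> 'a \<Rightarrow> 'a \<Rightarrow> 'a set" where
  "RFH sc F H = {x. \<exists>c :: nat \<times> nat \<Rightarrow> complex. finite {m. c m \<noteq> 0} \<and>
      x = (\<Sum>m\<in>{m. c m \<noteq> 0}. (case m of (i, j) \<Rightarrow> sc (c m) * F ^ i * H ^ j))}"

text \<open>R_eta(E) = ker eta, where eta : C[E] -> C is the algebra homomorphism with
 eta(E) = e, i.e. eta(q(E)) = q(e).\<close>
definition R_eta :: "(complex \<Rightarrow> 'a::ring_1) \<Rightarrow> 'a \<Rightarrow> complex \<Rightarrow> 'a set" where
  "R_eta sc E e = {peval sc q E | q. poly q e = 0}"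

definition R_Reta :: "(complex \<Rightarrow> 'a::ring_1) \<Rightarrow> 'a \<Rightarrow> complex \<Rightarrow> 'a set" where
  "R_Reta sc E e = {(\<Sum>i<n. r i * p i) | (n::nat) r p. \<forall>i<n. p i \<in> R_eta sc E e}"

text \<open>The projection u |-> u^eta onto the R(F,H)-component of R = R(F,H) + R R_eta(E).\<close>
definition eta_proj ::
  "(complex \<Rightarrow> 'a::ring_1) \<Rightarrow> 'a \<Rightarrow> 'a \<Rightarrow> 'a \<Rightarrow> complex \<Rightarrow> 'a \<Rightarrow> 'a" where
  "eta_proj sc E F H e u = (THE v. v \<in> RFH sc F H \<and> u - v \<in> R_Reta sc E e)"

end

theory Submission
  imports Defs
begin

text \<open>Write every element of \<open>R\<close> in the basis \<open>F\<^sup>i H\<^sup>j E\<^sup>k\<close> and substitute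
  \<open>E\<^sup>k \<mapsto> e\<^sup>k\<close>. The resulting linear map \<open>\<eta>\<close> takes values in \<open>R(F,H)\<close>, fixes \<open>R(F,H)\<close>,
  satisfies \<open>\<eta>(x q(E)) = q(e) \<eta>(x)\<close> and hence kills \<open>R R\<^sub>\<eta>(E)\<close>, and \<open>x - \<eta>(x) \<in> R R\<^sub>\<eta>(E)\<close>;
  so \<open>\<eta>\<close> is the projection \<open>\<pi>\<close>. For central \<open>z\<close>, \<open>w\<close> the element
  \<open>z w - \<eta>(z) \<eta>(w) = w (z - \<eta>(z)) + \<eta>(z) (w - \<eta>(w))\<close> lies in \<open>R R\<^sub>\<eta>(E)\<close>, and \<open>\<eta>(z) \<eta>(w)\<close>
  lies in the subalgebra \<open>R(F,H)\<close>, so \<open>\<pi>\<close> is multiplicative on the centre.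
  Since \<open>[H, F\<^sup>i H\<^sup>j E\<^sup>k] = (k - i) F\<^sup>i H\<^sup>j E\<^sup>k\<close>, a central element involves only the monomials
  \<open>F\<^sup>i H\<^sup>j E\<^sup>i\<close>, which \<open>\<eta>\<close> maps to the independent elements \<open>e\<^sup>i F\<^sup>i H\<^sup>j\<close> when \<open>e \<noteq> 0\<close>;
  so \<open>\<pi>\<close> is injective on the centre.\<close>

locale complex_scalars =
  fixes sc :: "complex \<Rightarrow> 'a::ring_1"
  assumes complex_alg: "complex_alg sc"
begin

lemma sc_0 [simp]: "sc 0 = 0"
  and sc_1 [simp]: "sc 1 = 1"
  and sc_add: "sc (a + b) = sc a + sc b"
  and sc_mult: "sc (a * b) = sc a * sc b"
  and sc_commute: "sc a * x = x * sc a"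
  using complex_alg unfolding complex_alg_def by blast+

lemma sc_uminus: "sc (- a) = - sc a"
  using sc_add[of a "- a"] by (simp add: minus_unique)

lemma sc_diff: "sc (a - b) = sc a - sc b"
  using sc_add[of a "- b"] by (simp add: sc_uminus)

lemma sc_of_nat: "sc (of_nat n) = of_nat n"
  by (induction n) (simp_all add: sc_add)

lemma sc_of_int: "sc (of_int z) = of_int z"
  by (cases z rule: int_cases) (simp_all add: sc_diff sc_uminus sc_of_nat)

lemma sc_sum: "sc (\<Sum>i\<in>I. g i) = (\<Sum>i\<in>I. sc (g i))"
  by (induction I rule: infinite_finite_induct) (simp_all add: sc_add)

lemma mult_sc_left: "x * (sc a * y) = sc a * (x * y)"
  by (simp add: mult.assoc[symmetric] sc_commute[of a x])

lemma sum_support_eq: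
  assumes "finite S" "{m. c m \<noteq> 0} \<subseteq> S"
  shows "(\<Sum>m | c m \<noteq> 0. sc (c m) * g m) = (\<Sum>m\<in>S. sc (c m) * g m)"
  by (rule sum.mono_neutral_left) (use assms in auto)

lemma peval_monom_minus_const: "peval sc (monom 1 k - [:c:]) x = x ^ k - sc c"
proof -
  let ?q = "monom 1 k - [:c:] :: complex poly"
  have peval_le: "peval sc p x = (\<Sum>i\<le>k. sc (coeff p i) * x ^ i)" if "degree p \<le> k" for p
    unfolding peval_def using that by (intro sum.mono_neutral_left) (auto simp: coeff_eq_0)
  have "degree ?q \<le> k"
    by (intro degree_diff_le) (auto simp: degree_monom_le)
  then have "peval sc ?q x = (\<Sum>i\<le>k. sc (coeff ?q i) * x ^ i)"
    by (rule peval_le)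
  also have "\<dots> = (\<Sum>i\<le>k. (if i = k then x ^ i else 0) - (if i = 0 then sc c * x ^ i else 0))"
    by (rule sum.cong) (auto simp: coeff_monom sc_diff left_diff_distrib coeff_pCons split: nat.split)
  also have "\<dots> = x ^ k - sc c"
    by (simp add: sum_subtractf)
  finally show ?thesis .
qed

definition sc_span :: "('i \<Rightarrow> 'a) \<Rightarrow> 'a set" where
  "sc_span g = {x. \<exists>c. finite {m. c m \<noteq> 0} \<and> x = (\<Sum>m | c m \<noteq> 0. sc (c m) * g m)}"

lemma sc_span_lincomb: "finite S \<Longrightarrow> (\<Sum>m\<in>S. sc (c m) * g m) \<in> sc_span g"
proof -
  assume "finite S"
  define c' where "c' m = (if m \<in> S then c m else 0)" for m
  have supp: "{m. c' m \<noteq> 0} \<subseteq> S" by (auto simp: c'_def)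
  have "(\<Sum>m\<in>S. sc (c m) * g m) = (\<Sum>m\<in>S. sc (c' m) * g m)"
    by (simp add: c'_def)
  also have "\<dots> = (\<Sum>m | c' m \<noteq> 0. sc (c' m) * g m)"
    using sum_support_eq[OF \<open>finite S\<close> supp] by simp
  finally show ?thesis
    unfolding sc_span_def using finite_subset[OF supp \<open>finite S\<close>] by blast
qed

lemma sc_span_E:
  assumes "x \<in> sc_span g"
  obtains S c where "finite S" "x = (\<Sum>m\<in>S. sc (c m) * g m)"
  using assms unfolding sc_span_def by blast

lemma sc_span_generator: "g m \<in> sc_span g"
  using sc_span_lincomb[of "{m}" "\<lambda>_. 1"] by simp

lemma sc_span_zero: "0 \<in> sc_span g"
  using sc_span_lincomb[of "{}"] by simp

lemma sc_span_scale: "x \<in> sc_span g \<Longrightarrow> sc a * x \<in> sc_span g"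
proof (elim sc_span_E)
  fix S c assume "finite S" "x = (\<Sum>m\<in>S. sc (c m) * g m)"
  moreover have "sc a * (\<Sum>m\<in>S. sc (c m) * g m) = (\<Sum>m\<in>S. sc (a * c m) * g m)"
    by (simp add: sum_distrib_left sc_mult mult.assoc)
  ultimately show "sc a * x \<in> sc_span g" by (simp add: sc_span_lincomb)
qed

lemma sc_span_add:
  assumes "x \<in> sc_span g" "y \<in> sc_span g"
  shows "x + y \<in> sc_span g"
proof -
  obtain S c T d where S: "finite S" "x = (\<Sum>m\<in>S. sc (c m) * g m)"
    and T: "finite T" "y = (\<Sum>m\<in>T. sc (d m) * g m)"
    using assms by (metis sc_span_E)
  have "x = (\<Sum>m\<in>S \<union> T. sc (if m \<in> S then c m else 0) * g m)"
    unfolding S(2) by (intro sum.mono_neutral_cong_left) (use S T in auto)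
  moreover have "y = (\<Sum>m\<in>S \<union> T. sc (if m \<in> T then d m else 0) * g m)"
    unfolding T(2) by (intro sum.mono_neutral_cong_left) (use S T in auto)
  ultimately have "x + y = (\<Sum>m\<in>S \<union> T.
      sc ((if m \<in> S then c m else 0) + (if m \<in> T then d m else 0)) * g m)"
    by (simp add: sc_add distrib_right sum.distrib)
  then show ?thesis using S T by (simp add: sc_span_lincomb)
qed

lemma sc_span_sum: "(\<And>i. i \<in> I \<Longrightarrow> h i \<in> sc_span g) \<Longrightarrow> (\<Sum>i\<in>I. h i) \<in> sc_span g"
  by (induction I rule: infinite_finite_induct) (simp_all add: sc_span_zero sc_span_add)

lemma sc_span_mult_left:
  assumes "\<And>m. a * g m \<in> sc_span g" "x \<in> sc_span g"
  shows "a * x \<in> sc_span g"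
  using assms(2)
  by (elim sc_span_E) (simp add: sum_distrib_left mult_sc_left sc_span_sum sc_span_scale assms(1))

end

locale scalar_basis = complex_scalars sc for sc :: "complex \<Rightarrow> 'a::ring_1" +
  fixes b :: "'i \<Rightarrow> 'a"
  assumes unique_repr: "\<exists>!c. finite {m. c m \<noteq> 0} \<and> x = (\<Sum>m | c m \<noteq> 0. sc (c m) * b m)"
begin

definition coord :: "'a \<Rightarrow> 'i \<Rightarrow> complex" where
  "coord x = (THE c. finite {m. c m \<noteq> 0} \<and> x = (\<Sum>m | c m \<noteq> 0. sc (c m) * b m))"

lemma coord_repr: "finite {m. coord x m \<noteq> 0} \<and> x = (\<Sum>m | coord x m \<noteq> 0. sc (coord x m) * b m)"
  unfolding coord_def by (rule theI'[OF unique_repr])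

lemma finite_coord_support [simp]: "finite {m. coord x m \<noteq> 0}"
  using coord_repr by blast

lemma sum_coord:
  assumes "finite S" "{m. coord x m \<noteq> 0} \<subseteq> S"
  shows "(\<Sum>m\<in>S. sc (coord x m) * b m) = x"
  using coord_repr[of x] sum_support_eq[OF assms] by simp

lemma coord_eqI:
  assumes "finite S" "{m. c m \<noteq> 0} \<subseteq> S" "x = (\<Sum>m\<in>S. sc (c m) * b m)"
  shows "coord x = c"
  unfolding coord_def
proof (rule the1_equality[OF unique_repr])
  show "finite {m. c m \<noteq> 0} \<and> x = (\<Sum>m | c m \<noteq> 0. sc (c m) * b m)"
    using assms finite_subset sum_support_eq[OF assms(1,2)] by auto
qed

lemma coord_add: "coord (x + y) = (\<lambda>m. coord x m + coord y m)"
proof (rule coord_eqI)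
  let ?S = "{m. coord x m \<noteq> 0} \<union> {m. coord y m \<noteq> 0}"
  show "finite ?S" "{m. coord x m + coord y m \<noteq> 0} \<subseteq> ?S" by auto
  have "x + y = (\<Sum>m\<in>?S. sc (coord x m) * b m) + (\<Sum>m\<in>?S. sc (coord y m) * b m)"
    by (simp add: sum_coord)
  then show "x + y = (\<Sum>m\<in>?S. sc (coord x m + coord y m) * b m)"
    by (simp add: sc_add distrib_right sum.distrib)
qed

lemma coord_scale: "coord (sc a * x) = (\<lambda>m. a * coord x m)"
proof (rule coord_eqI)
  let ?S = "{m. coord x m \<noteq> 0}"
  show "finite ?S" "{m. a * coord x m \<noteq> 0} \<subseteq> ?S" by auto
  have "sc a * x = sc a * (\<Sum>m\<in>?S. sc (coord x m) * b m)"
    by (simp add: sum_coord)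
  then show "sc a * x = (\<Sum>m\<in>?S. sc (a * coord x m) * b m)"
    by (simp add: sc_mult sum_distrib_left mult.assoc)
qed

lemma coord_basis: "coord (b n) = (\<lambda>m. if m = n then 1 else 0)"
  by (rule coord_eqI[of "{n}"]) auto

lemma coord_eq_0_iff: "coord x = (\<lambda>_. 0) \<longleftrightarrow> x = 0"
proof
  assume "coord x = (\<lambda>_. 0)"
  then show "x = 0" using sum_coord[of "{}" x] by simp
qed (auto intro: coord_eqI[of "{}"])

definition lin_ext :: "('i \<Rightarrow> 'a) \<Rightarrow> 'a \<Rightarrow> 'a" where
  "lin_ext g x = (\<Sum>m | coord x m \<noteq> 0. sc (coord x m) * g m)"

lemma lin_ext_eq:
  "finite S \<Longrightarrow> {m. coord x m \<noteq> 0} \<subseteq> S \<Longrightarrow> lin_ext g x = (\<Sum>m\<in>S. sc (coord x m) * g m)"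
  unfolding lin_ext_def by (rule sum_support_eq)

lemma lin_ext_add: "lin_ext g (x + y) = lin_ext g x + lin_ext g y"
proof -
  let ?S = "{m. coord x m \<noteq> 0} \<union> {m. coord y m \<noteq> 0}"
  have "lin_ext g (x + y) = (\<Sum>m\<in>?S. sc (coord (x + y) m) * g m)"
    by (rule lin_ext_eq) (auto simp: coord_add)
  also have "\<dots> = (\<Sum>m\<in>?S. sc (coord x m) * g m) + (\<Sum>m\<in>?S. sc (coord y m) * g m)"
    by (simp add: coord_add sc_add distrib_right sum.distrib)
  also have "\<dots> = lin_ext g x + lin_ext g y"
    by (simp add: lin_ext_eq[of ?S x] lin_ext_eq[of ?S y] Un_upper1 Un_upper2)
  finally show ?thesis .
qed

lemma lin_ext_scale: "lin_ext g (sc a * x) = sc a * lin_ext g x"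
proof -
  have "lin_ext g (sc a * x) = (\<Sum>m | coord x m \<noteq> 0. sc (coord (sc a * x) m) * g m)"
    by (rule lin_ext_eq) (auto simp: coord_scale)
  then show ?thesis
    by (simp add: lin_ext_def coord_scale sc_mult sum_distrib_left mult.assoc)
qed

lemma lin_ext_zero: "lin_ext g 0 = 0"
  using lin_ext_scale[of g 0 0] by simp

lemma lin_ext_diff: "lin_ext g (x - y) = lin_ext g x - lin_ext g y"
proof -
  have "lin_ext g (x - y) = lin_ext g (x + sc (- 1) * y)"
    by (simp add: sc_uminus)
  also have "\<dots> = lin_ext g x + sc (- 1) * lin_ext g y"
    by (simp only: lin_ext_add lin_ext_scale)
  finally show ?thesis
    by (simp add: sc_uminus)
qed

lemma lin_ext_sum: "lin_ext g (\<Sum>i\<in>I. h i) = (\<Sum>i\<in>I. lin_ext g (h i))"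
  by (induction I rule: infinite_finite_induct) (simp_all add: lin_ext_zero lin_ext_add)

lemma lin_ext_basis: "lin_ext g (b n) = g n"
  by (simp add: lin_ext_def coord_basis)

lemma lin_ext_lincomb:
  "lin_ext g (\<Sum>m\<in>S. sc (c m) * b (\<sigma> m)) = (\<Sum>m\<in>S. sc (c m) * g (\<sigma> m))"
  by (simp add: lin_ext_sum lin_ext_scale lin_ext_basis)

lemma coord_lin_ext_reindex:
  assumes inj: "inj_on \<sigma> {m. coord x m \<noteq> 0}" and m: "coord x m \<noteq> 0"
  shows "coord (lin_ext (\<lambda>n. sc (w n) * b (\<sigma> n)) x) (\<sigma> m) = w m * coord x m"
proof -
  let ?S = "{m. coord x m \<noteq> 0}"
  let ?inv = "the_inv_into ?S \<sigma>"
  define c where "c n = (if n \<in> \<sigma> ` ?S then w (?inv n) * coord x (?inv n) else 0)" for n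
  have "lin_ext (\<lambda>n. sc (w n) * b (\<sigma> n)) x = (\<Sum>n\<in>?S. sc (w n * coord x n) * b (\<sigma> n))"
    by (simp add: lin_ext_def sc_mult mult.assoc mult.commute[of "w _"])
  also have "\<dots> = (\<Sum>n\<in>\<sigma> ` ?S. sc (c n) * b n)"
    by (simp add: sum.reindex[OF inj] c_def the_inv_into_f_f[OF inj])
  finally have "coord (lin_ext (\<lambda>n. sc (w n) * b (\<sigma> n)) x) = c"
    by (intro coord_eqI[of "\<sigma> ` ?S"]) (auto simp: c_def)
  then show ?thesis
    using m by (simp add: c_def the_inv_into_f_f[OF inj])
qed

end

lemma commutator_power:
  fixes H X :: "'a::ring_1"
  assumes "H * X - X * H = of_int c * X"
  shows "H * X ^ n - X ^ n * H = of_int (int n * c) * X ^ n"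
proof (induction n)
  case (Suc n)
  have "H * X ^ Suc n - X ^ Suc n * H = (H * X ^ n - X ^ n * H) * X + X ^ n * (H * X - X * H)"
    by (simp add: power_Suc2 mult.assoc algebra_simps del: power_Suc)
  also have "\<dots> = of_int (int n * c) * X ^ Suc n + of_int c * X ^ Suc n"
    by (simp add: Suc.IH assms mult.assoc mult_of_int_commute power_Suc2 del: power_Suc)
  also have "\<dots> = of_int (int (Suc n) * c) * X ^ Suc n"
    by (simp add: algebra_simps del: power_Suc)
  finally show ?case .
qed simp

lemma R_Reta_zero: "0 \<in> R_Reta sc E e"
  unfolding R_Reta_def by (rule CollectI, rule exI[of _ 0]) auto

lemma R_Reta_add_mult:
  assumes "a \<in> R_Reta sc E e" "p \<in> R_eta sc E e"
  shows "a + r * p \<in> R_Reta sc E e"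
proof -
  obtain n :: nat and rs ps where a: "a = (\<Sum>i<n. rs i * ps i)" and ps: "\<forall>i<n. ps i \<in> R_eta sc E e"
    using assms(1) unfolding R_Reta_def by blast
  have "a + r * p = (\<Sum>i<Suc n. (rs(n := r)) i * (ps(n := p)) i)"
    by (simp add: a)
  moreover have "\<forall>i<Suc n. (ps(n := p)) i \<in> R_eta sc E e"
    using ps assms(2) by auto
  ultimately show ?thesis unfolding R_Reta_def by blast
qed

lemma R_Reta_add:
  assumes a: "a \<in> R_Reta sc E e" and b: "b \<in> R_Reta sc E e"
  shows "a + b \<in> R_Reta sc E e"
proof -
  obtain n :: nat and rs ps where b: "b = (\<Sum>i<n. rs i * ps i)" and ps: "\<forall>i<n. ps i \<in> R_eta sc E e"
    using b unfolding R_Reta_def by blast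
  have "a + (\<Sum>i<m. rs i * ps i) \<in> R_Reta sc E e" if "m \<le> n" for m
    using that
  proof (induction m)
    case (Suc m)
    then have "a + (\<Sum>i<m. rs i * ps i) + rs m * ps m \<in> R_Reta sc E e"
      using ps by (intro R_Reta_add_mult) auto
    then show ?case by (simp add: add.assoc)
  qed (simp add: a)
  then show ?thesis using b by simp
qed

lemma R_Reta_mult_left:
  assumes "a \<in> R_Reta sc E e"
  shows "r * a \<in> R_Reta sc E e"
proof -
  obtain n :: nat and rs ps where a: "a = (\<Sum>i<n. rs i * ps i)" and ps: "\<forall>i<n. ps i \<in> R_eta sc E e"
    using assms unfolding R_Reta_def by blast
  have "r * a = (\<Sum>i<n. (r * rs i) * ps i)"
    by (simp add: a sum_distrib_left mult.assoc)
  then show ?thesis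
    unfolding R_Reta_def using ps by (intro CollectI exI[of _ n] exI[of _ "\<lambda>i. r * rs i"] exI[of _ ps]) blast
qed

lemma R_Reta_sum: "(\<And>i. i \<in> I \<Longrightarrow> g i \<in> R_Reta sc E e) \<Longrightarrow> (\<Sum>i\<in>I. g i) \<in> R_Reta sc E e"
  by (induction I rule: infinite_finite_induct) (simp_all add: R_Reta_zero R_Reta_add)

lemma (in complex_scalars) RFH_eq_sc_span: "RFH sc F H = sc_span (\<lambda>(i, j). F ^ i * H ^ j)"
proof -
  have "(case m of (i, j) \<Rightarrow> sc (c m) * F ^ i * H ^ j) = sc (c m) * (case m of (i, j) \<Rightarrow> F ^ i * H ^ j)"
    for c :: "nat \<times> nat \<Rightarrow> complex" and m
    by (cases m) (simp add: mult.assoc)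
  then show ?thesis unfolding RFH_def sc_span_def by simp
qed

lemma center_diff: "z \<in> center \<Longrightarrow> w \<in> center \<Longrightarrow> z - w \<in> center"
  by (simp add: center_def left_diff_distrib right_diff_distrib)

definition pbw_monomial :: "'a::ring_1 \<Rightarrow> 'a \<Rightarrow> 'a \<Rightarrow> nat \<times> nat \<times> nat \<Rightarrow> 'a" where
  "pbw_monomial E F H = (\<lambda>(i, j, k). F ^ i * H ^ j * E ^ k)"

locale R_alg =
  fixes sc :: "complex \<Rightarrow> 'a::ring_1" and f :: "complex poly" and E F H :: 'a
  assumes R_alg: "is_R_alg sc f E F H"

sublocale R_alg \<subseteq> scalar_basis sc "pbw_monomial E F H"
proof unfold_locales
  show "complex_alg sc"
    using R_alg by (simp add: is_R_alg_def)
  have "(case m of (i, j, k) \<Rightarrow> sc (c m) * F ^ i * H ^ j * E ^ k) = sc (c m) * pbw_monomial E F H m"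
    for c :: "nat \<times> nat \<times> nat \<Rightarrow> complex" and m
    by (cases m) (simp add: pbw_monomial_def mult.assoc)
  then show "\<exists>!c. finite {m. c m \<noteq> 0} \<and> x = (\<Sum>m | c m \<noteq> 0. sc (c m) * pbw_monomial E F H m)" for x
    using R_alg unfolding is_R_alg_def by simp
qed

context R_alg
begin

lemma H_mult_F_power: "H * F ^ i = F ^ i * H + of_int (- int i) * F ^ i"
proof -
  have "H * F - F * H = of_int (- 1) * F"
    using R_alg by (simp add: is_R_alg_def)
  from commutator_power[OF this, of i] show ?thesis
    by (simp add: algebra_simps)
qed

lemma H_mult_E_power: "H * E ^ k = E ^ k * H + of_int (int k) * E ^ k"
proof -
  have "H * E - E * H = of_int 1 * E"
    using R_alg by (simp add: is_R_alg_def)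
  from commutator_power[OF this, of k] show ?thesis
    by (simp add: algebra_simps)
qed

lemma H_commutator_pbw_monomial:
  "H * pbw_monomial E F H (i, j, k) - pbw_monomial E F H (i, j, k) * H
     = of_int (int k - int i) * pbw_monomial E F H (i, j, k)"
proof -
  have "H * (F ^ i * H ^ j * E ^ k) = (H * F ^ i) * H ^ j * E ^ k"
    by (simp only: mult.assoc)
  also have "\<dots> = F ^ i * (H * H ^ j) * E ^ k + of_int (- int i) * (F ^ i * H ^ j * E ^ k)"
    by (simp only: H_mult_F_power distrib_right mult.assoc)
  also have "H * H ^ j = H ^ j * H"
    by (rule power_commutes[symmetric])
  also have "F ^ i * (H ^ j * H) * E ^ k = F ^ i * H ^ j * (H * E ^ k)"
    by (simp only: mult.assoc)
  also have "\<dots> = F ^ i * H ^ j * E ^ k * H + of_int (int k) * (F ^ i * H ^ j * E ^ k)"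
    by (simp add: H_mult_E_power distrib_left mult.assoc mult_of_nat_commute)
  finally show ?thesis
    by (simp add: pbw_monomial_def left_diff_distrib)
qed

lemma coord_center:
  assumes u: "u \<in> center" and m: "coord u (i, j, k) \<noteq> 0"
  shows "k = i"
proof -
  let ?S = "{m. coord u m \<noteq> 0}"
  let ?b = "pbw_monomial E F H"
  let ?w = "\<lambda>(i, j, k). of_int (int k - int i) :: complex"
  have weight: "H * ?b m - ?b m * H = sc (?w m) * ?b m" for m
    by (cases m) (simp only: prod.case H_commutator_pbw_monomial sc_of_int)
  have "0 = H * u - u * H"
    using u by (simp add: center_def)
  also have "\<dots> = H * (\<Sum>m\<in>?S. sc (coord u m) * ?b m) - (\<Sum>m\<in>?S. sc (coord u m) * ?b m) * H"
    by (simp add: sum_coord)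
  also have "\<dots> = (\<Sum>m\<in>?S. sc (coord u m) * (H * ?b m - ?b m * H))"
    by (simp only: sum_distrib_left sum_distrib_right sum_subtractf right_diff_distrib
        mult_sc_left mult.assoc)
  also have "\<dots> = (\<Sum>m\<in>?S. sc (coord u m * ?w m) * ?b m)"
    by (simp add: weight sc_mult mult.assoc)
  finally have "coord 0 = (\<lambda>m. coord u m * ?w m)"
    by (intro coord_eqI) auto
  then have "coord u (i, j, k) * ?w (i, j, k) = 0"
    by (metis coord_eq_0_iff)
  then show ?thesis
    using m by simp
qed

lemma RFH_mult:
  assumes v: "v \<in> RFH sc F H" and w: "w \<in> RFH sc F H"
  shows "v * w \<in> RFH sc F H"
proof -
  let ?g = "\<lambda>(i, j). F ^ i * H ^ j"
  have F_mult: "F * x \<in> sc_span ?g" if "x \<in> sc_span ?g" for x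
  proof (rule sc_span_mult_left[OF _ that])
    fix m :: "nat \<times> nat"
    show "F * ?g m \<in> sc_span ?g"
      using sc_span_generator[of ?g "(Suc (fst m), snd m)"] by (simp add: case_prod_beta mult.assoc)
  qed
  have H_mult: "H * x \<in> sc_span ?g" if "x \<in> sc_span ?g" for x
  proof (rule sc_span_mult_left[OF _ that])
    fix m :: "nat \<times> nat"
    obtain i j where m: "m = (i, j)" by fastforce
    have "H * ?g m = (H * F ^ i) * H ^ j"
      by (simp add: m mult.assoc)
    also have "\<dots> = F ^ i * H ^ Suc j + of_int (- int i) * (F ^ i * H ^ j)"
      by (simp only: H_mult_F_power distrib_right mult.assoc power_Suc)
    finally have "H * ?g m = ?g (i, Suc j) + sc (of_int (- int i)) * ?g (i, j)"
      by (simp only: m prod.case sc_of_int)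
    then show "H * ?g m \<in> sc_span ?g"
      by (simp only: sc_span_add sc_span_scale sc_span_generator)
  qed
  have "F ^ i * x \<in> sc_span ?g" if "x \<in> sc_span ?g" for i x
    using that by (induction i) (simp_all add: mult.assoc F_mult)
  moreover have "H ^ j * x \<in> sc_span ?g" if "x \<in> sc_span ?g" for j x
    using that by (induction j) (simp_all add: mult.assoc H_mult)
  ultimately have gen_mult: "?g m * w \<in> sc_span ?g" for m
    using w by (simp add: RFH_eq_sc_span case_prod_beta mult.assoc)
  obtain S c where "v = (\<Sum>m\<in>S. sc (c m) * ?g m)"
    using v unfolding RFH_eq_sc_span by (rule sc_span_E)
  then have "v * w = (\<Sum>m\<in>S. sc (c m) * (?g m * w))"
    by (simp add: sum_distrib_right mult.assoc)
  then show ?thesis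
    by (simp add: RFH_eq_sc_span sc_span_sum sc_span_scale gen_mult)
qed

definition eta_subst :: "complex \<Rightarrow> 'a \<Rightarrow> 'a" where
  "eta_subst e = lin_ext (\<lambda>(i, j, k). sc (e ^ k) * pbw_monomial E F H (i, j, 0))"

lemma eta_subst_add: "eta_subst e (x + y) = eta_subst e x + eta_subst e y"
  and eta_subst_sum: "eta_subst e (\<Sum>i\<in>I. h i) = (\<Sum>i\<in>I. eta_subst e (h i))"
  and eta_subst_scale: "eta_subst e (sc a * x) = sc a * eta_subst e x"
  and eta_subst_diff: "eta_subst e (x - y) = eta_subst e x - eta_subst e y"
  by (simp_all add: eta_subst_def lin_ext_add lin_ext_sum lin_ext_scale lin_ext_diff)

lemma eta_subst_pbw_monomial:
  "eta_subst e (pbw_monomial E F H (i, j, k)) = sc (e ^ k) * pbw_monomial E F H (i, j, 0)"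
  by (simp add: eta_subst_def lin_ext_basis)

lemma eta_subst_one: "eta_subst e 1 = 1"
  using eta_subst_pbw_monomial[of e 0 0 0] by (simp add: pbw_monomial_def)

lemma eta_subst_mult_E_power: "eta_subst e (x * E ^ l) = sc (e ^ l) * eta_subst e x"
proof -
  let ?S = "{m. coord x m \<noteq> 0}"
  let ?b = "pbw_monomial E F H"
  let ?g = "\<lambda>(i, j, k). sc (e ^ k) * ?b (i, j, 0)"
  let ?shift = "\<lambda>(i, j, k). (i, j, k + l)"
  have "?b m * E ^ l = ?b (?shift m)" for m
    by (cases m) (simp add: pbw_monomial_def power_add mult.assoc)
  moreover have "x * E ^ l = (\<Sum>m\<in>?S. sc (coord x m) * ?b m) * E ^ l"
    by (simp add: sum_coord)
  ultimately have "x * E ^ l = (\<Sum>m\<in>?S. sc (coord x m) * ?b (?shift m))"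
    by (simp add: sum_distrib_right mult.assoc)
  then have "eta_subst e (x * E ^ l) = (\<Sum>m\<in>?S. sc (coord x m) * ?g (?shift m))"
    by (simp add: eta_subst_def lin_ext_lincomb)
  also have "\<dots> = (\<Sum>m\<in>?S. sc (coord x m) * (sc (e ^ l) * ?g m))"
    by (rule sum.cong) (auto simp: power_add mult.commute[of _ "e ^ l"] sc_mult mult.assoc)
  also have "\<dots> = sc (e ^ l) * eta_subst e x"
    by (simp add: eta_subst_def lin_ext_def sum_distrib_left mult.assoc[symmetric] mult.commute
        flip: sc_mult)
  finally show ?thesis .
qed

lemma eta_subst_mult_peval: "eta_subst e (x * peval sc q E) = sc (poly q e) * eta_subst e x"
proof -
  have "x * peval sc q E = (\<Sum>l\<le>degree q. sc (coeff q l) * (x * E ^ l))"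
    by (simp add: peval_def sum_distrib_left mult_sc_left)
  then have "eta_subst e (x * peval sc q E) = (\<Sum>l\<le>degree q. sc (coeff q l) * (sc (e ^ l) * eta_subst e x))"
    by (simp add: eta_subst_sum eta_subst_scale eta_subst_mult_E_power)
  also have "\<dots> = sc (poly q e) * eta_subst e x"
    by (simp add: poly_altdef sc_sum sum_distrib_right sc_mult mult.assoc)
  finally show ?thesis .
qed

lemma eta_subst_R_Reta:
  assumes "a \<in> R_Reta sc E e"
  shows "eta_subst e a = 0"
proof -
  obtain n :: nat and r p where a: "a = (\<Sum>i<n. r i * p i)" and p: "\<forall>i<n. p i \<in> R_eta sc E e"
    using assms unfolding R_Reta_def by blast
  have "eta_subst e (r i * p i) = 0" if "i < n" for i
    using p that unfolding R_eta_def by (auto simp: eta_subst_mult_peval)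
  then show ?thesis
    by (simp add: a eta_subst_sum)
qed

lemma eta_subst_RFH:
  assumes "v \<in> RFH sc F H"
  shows "eta_subst e v = v"
proof -
  have monomial: "eta_subst e (F ^ i * H ^ j) = F ^ i * H ^ j" for i j
    using eta_subst_pbw_monomial[of e i j 0] by (simp add: pbw_monomial_def)
  obtain S c where "v = (\<Sum>m\<in>S. sc (c m) * (F ^ fst m * H ^ snd m))"
    using assms unfolding RFH_eq_sc_span by (elim sc_span_E) (simp add: case_prod_beta)
  then show ?thesis
    by (simp add: eta_subst_sum eta_subst_scale monomial)
qed

lemma eta_subst_in_RFH: "eta_subst e x \<in> RFH sc F H"
proof -
  have "(\<lambda>(i, j, k). sc (e ^ k) * pbw_monomial E F H (i, j, 0)) m \<in> sc_span (\<lambda>(i, j). F ^ i * H ^ j)"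
    for m
    using sc_span_generator[of "\<lambda>(i, j). F ^ i * H ^ j" "(fst m, fst (snd m))"]
    by (simp add: pbw_monomial_def sc_span_scale split_def)
  then show ?thesis
    unfolding RFH_eq_sc_span eta_subst_def lin_ext_def
    by (intro sc_span_sum sc_span_scale)
qed

lemma diff_eta_subst_in_R_Reta: "x - eta_subst e x \<in> R_Reta sc E e"
proof -
  let ?S = "{m. coord x m \<noteq> 0}"
  let ?b = "pbw_monomial E F H"
  have "?b (i, j, k) - sc (e ^ k) * ?b (i, j, 0) \<in> R_Reta sc E e" for i j k
  proof -
    have "peval sc (monom 1 k - [:e ^ k:]) E \<in> R_eta sc E e"
      unfolding R_eta_def by (auto simp: poly_monom)
    then have "0 + F ^ i * H ^ j * peval sc (monom 1 k - [:e ^ k:]) E \<in> R_Reta sc E e"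
      by (intro R_Reta_add_mult R_Reta_zero)
    then show ?thesis
      by (simp add: peval_monom_minus_const pbw_monomial_def right_diff_distrib sc_commute)
  qed
  then have "sc (coord x m) * (?b m - eta_subst e (?b m)) \<in> R_Reta sc E e" for m
    by (cases m) (simp add: eta_subst_pbw_monomial R_Reta_mult_left)
  moreover have "x - eta_subst e x = (\<Sum>m\<in>?S. sc (coord x m) * (?b m - eta_subst e (?b m)))"
  proof -
    have "eta_subst e x = eta_subst e (\<Sum>m\<in>?S. sc (coord x m) * ?b m)"
      by (simp add: sum_coord)
    then have "eta_subst e x = (\<Sum>m\<in>?S. sc (coord x m) * eta_subst e (?b m))"
      by (simp add: eta_subst_sum eta_subst_scale)
    then have "x - eta_subst e x
        = (\<Sum>m\<in>?S. sc (coord x m) * ?b m) - (\<Sum>m\<in>?S. sc (coord x m) * eta_subst e (?b m))"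
      by (simp add: sum_coord)
    then show ?thesis
      by (simp add: right_diff_distrib sum_subtractf)
  qed
  ultimately show ?thesis
    by (simp add: R_Reta_sum)
qed

lemma eta_proj_eq_eta_subst: "eta_proj sc E F H e x = eta_subst e x"
  unfolding eta_proj_def
proof (rule the_equality)
  show "eta_subst e x \<in> RFH sc F H \<and> x - eta_subst e x \<in> R_Reta sc E e"
    by (simp add: eta_subst_in_RFH diff_eta_subst_in_R_Reta)
next
  fix v
  assume v: "v \<in> RFH sc F H \<and> x - v \<in> R_Reta sc E e"
  then have "eta_subst e x - v = 0"
    using eta_subst_R_Reta[of "x - v"] eta_subst_RFH[of v]
    by (simp add: eta_subst_diff)
  then show "v = eta_subst e x" by simp
qed

lemma eta_subst_mult_center:
  assumes z: "z \<in> center" and w: "w \<in> center"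
  shows "eta_subst e (z * w) = eta_subst e z * eta_subst e w"
proof -
  let ?\<eta> = "eta_subst e"
  have "z * w - ?\<eta> z * ?\<eta> w = w * (z - ?\<eta> z) + ?\<eta> z * (w - ?\<eta> w)"
    using w by (simp add: center_def algebra_simps)
  also have "\<dots> \<in> R_Reta sc E e"
    by (intro R_Reta_add R_Reta_mult_left diff_eta_subst_in_R_Reta)
  finally have "?\<eta> (z * w - ?\<eta> z * ?\<eta> w) = 0"
    by (rule eta_subst_R_Reta)
  then have "?\<eta> (z * w) = ?\<eta> (?\<eta> z * ?\<eta> w)"
    by (simp add: eta_subst_diff)
  also have "\<dots> = ?\<eta> z * ?\<eta> w"
    by (intro eta_subst_RFH RFH_mult eta_subst_in_RFH)
  finally show ?thesis .
qed

lemma eta_subst_center_eq_0_iff: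
  assumes e: "e \<noteq> 0" and u: "u \<in> center"
  shows "eta_subst e u = 0 \<longleftrightarrow> u = 0"
proof
  assume eta_u: "eta_subst e u = 0"
  let ?\<sigma> = "\<lambda>(i, j, k :: nat). (i, j, 0 :: nat)"
  let ?w = "\<lambda>(i, j, k :: nat). e ^ k"
  have eta: "eta_subst e = lin_ext (\<lambda>m. sc (?w m) * pbw_monomial E F H (?\<sigma> m))"
    unfolding eta_subst_def by (intro arg_cong[where f = lin_ext] ext) (simp add: split_def)
  have inj: "inj_on ?\<sigma> {m. coord u m \<noteq> 0}"
    by (auto intro!: inj_onI dest: coord_center[OF u])
  have "coord u m = 0" for m
  proof (rule ccontr)
    assume m: "coord u m \<noteq> 0"
    have "coord (eta_subst e u) (?\<sigma> m) = ?w m * coord u m"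
      unfolding eta by (rule coord_lin_ext_reindex[OF inj m])
    with eta_u m e show False
      by (cases m) (simp add: coord_eq_0_iff[THEN iffD2])
  qed
  then have "coord u = (\<lambda>_. 0)"
    by (simp add: fun_eq_iff)
  then show "u = 0"
    by (simp add: coord_eq_0_iff)
qed (simp add: eta_subst_def lin_ext_zero)

lemma inj_on_eta_subst_center:
  assumes "e \<noteq> 0"
  shows "inj_on (eta_subst e) center"
proof (rule inj_onI)
  fix z w
  assume "z \<in> center" "w \<in> center" "eta_subst e z = eta_subst e w"
  then show "z = w"
    using eta_subst_center_eq_0_iff[OF assms center_diff] by (simp add: eta_subst_diff)
qed

end

theorem mainTheorem15:
  fixes sc :: "complex \<Rightarrow> 'a::ring_1"
    and f :: "complex poly"
    and E F H :: 'a
    and e :: complex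
  assumes R: "is_R_alg sc f E F H"
    and e_nz: "e \<noteq> 0"
  shows "eta_proj sc E F H e ` center \<subseteq> RFH sc F H \<and>
         eta_proj sc E F H e 1 = 1 \<and>
         (\<forall>z\<in>center. \<forall>w\<in>center.
             eta_proj sc E F H e (z + w) = eta_proj sc E F H e z + eta_proj sc E F H e w) \<and>
         (\<forall>c. \<forall>z\<in>center. eta_proj sc E F H e (sc c * z) = sc c * eta_proj sc E F H e z) \<and>
         (\<forall>z\<in>center. \<forall>w\<in>center.
             eta_proj sc E F H e (z * w) = eta_proj sc E F H e z * eta_proj sc E F H e w) \<and>
         inj_on (eta_proj sc E F H e) center"
proof -
  interpret R_alg sc f E F H
    by (rule R_alg.intro[OF R])
  have "eta_proj sc E F H e = eta_subst e"
    by (rule ext) (rule eta_proj_eq_eta_subst)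
  then show ?thesis
    using eta_subst_in_RFH eta_subst_one eta_subst_add eta_subst_scale eta_subst_mult_center
      inj_on_eta_subst_center[OF e_nz]
    by auto
qed

end
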